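(* Let $X \subset Y \subset \mathbb{R}^{n}$ be finite sets, with $X$ having at least $k+1$ points. Define $i_{\ast}: \operatorname{Br}_{k}(X) \to \operatorname{Br}_{k}(Y)$ by sending a branch point $(s,[x])$ of $\Gamma_k(X)$ to the maximal branch point of $\Gamma_{k}(Y)$ below $(s,[x])$, where $x$ is regarded as a vertex of $L_{s,k}(Y)$. Then $i_*$ is order-preserving, and for all branch points $a,b$ of $\Gamma_{k}(X)$, \[ i_{\ast}(a) \cup i_{\ast}(b) \leq i_{\ast}(a \cup b), \] where the join on the left is taken in $\Gamma_{k}(Y)$ and the join $a \cup b$ on the right in $\Gamma_{k}(X)$.
   Context: $\mathbb{R}^n$ has Euclidean metric $d$. For $s\ge 0$, $V_s(X)$ is the Vietoris–Rips complex (vertex set $X$, simplices nonempty subsets with pairwise distances $\le s$), and for an integer $k\ge 0$, $L_{s,k}(X)$ is the full subcomplex of $V_s(X)$ on the vertices $x$ having at least $k$ points $x'\ne x$ of $X$ with $d(x,x')\le s$; for $X \subset Y$, $L_{s,k}(X) \subset L_{s,k}(Y)$. $\Gamma_{k}(X)$ is the poset whose elements are pairs $(s,[x])$ with $s \in \mathbb{R}_{\geq 0}$ and $[x] \in \pi_{0}L_{s,k}(X)$, with $(s,[x]) \leq (t,[y])$ iff $s \leq t$ and the function $\pi_{0}L_{s,k}(X) \to \pi_{0}L_{t,k}(X)$ induced by inclusion sends $[x]$ to $[y]$. $\cup$ denotes least upper bound (join), which exists for any two elements. An element $(t,[x])$ is a branch point if either (1) there is $s_{0} < t$ such that for all $s$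 with $s_{0} \leq s < t$ there are two distinct elements $(s,[x_{0}]) \neq (s,[x_{1}])$ both $\leq (t,[x])$; or (2) there is no element $(s,[y])$ with $s<t$ and $(s,[y]) \leq (t,[x])$. $\operatorname{Br}_{k}(X)$ is the poset of branch points. Every element $p$ has a unique maximal branch point below it: a branch point $b \le p$ with $b' \le b$ for all branch points $b' \le p$. *)

theory Defs
  imports "HOL-Analysis.Analysis"
begin


definition VR :: "(real ^ ('n::finite)) set \<Rightarrow> real \<Rightarrow> (real ^ ('n::finite)) set set" where
  "VR X s = {\<sigma>. \<sigma> \<subseteq> X \<and> \<sigma> \<noteq> {} \<and> finite \<sigma> \<and> (\<forall>x\<in>\<sigma>. \<forall>y\<in>\<sigma>. dist x y \<le> s)}"

definition Lverts :: "(real ^ ('n::finite)) set \<Rightarrow> nat \<Rightarrow> real \<Rightarrow> (real ^ ('n::finite)) set" where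
  "Lverts X k s = {x\<in>X. k \<le> card {x'\<in>X. x' \<noteq> x \<and> dist x x' \<le> s}}"

definition L :: "(real ^ ('n::finite)) set \<Rightarrow> nat \<Rightarrow> real \<Rightarrow> (real ^ ('n::finite)) set set" where
  "L X k s = {\<sigma>\<in>VR X s. \<sigma> \<subseteq> Lverts X k s}"

definition scomp :: "'a set set \<Rightarrow> 'a \<Rightarrow> 'a set" where
  "scomp K x = {y. (\<lambda>u v. {u, v} \<in> K)\<^sup>*\<^sup>* x y}"

definition pi0 :: "'a set set \<Rightarrow> 'a set set" where
  "pi0 K = scomp K ` (\<Union>K)"

definition Gamma :: "(real ^ ('n::finite)) set \<Rightarrow> nat \<Rightarrow> (real \<times> (real ^ ('n::finite)) set) set" where
  "Gamma X k = {(s, C). 0 \<le> s \<and> C \<in> pi0 (L X k s)}"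

text \<open>(s,C) \<le> (t,D) iff s \<le> t and the map induced by inclusion L_s \<subseteq> L_t
sends C to D.\<close>
definition gle :: "(real ^ ('n::finite)) set \<Rightarrow> nat \<Rightarrow> real \<times> (real ^ ('n::finite)) set \<Rightarrow> real \<times> (real ^ ('n::finite)) set \<Rightarrow> bool" where
  "gle X k p q \<longleftrightarrow> p \<in> Gamma X k \<and> q \<in> Gamma X k \<and> fst p \<le> fst q \<and>
     (\<forall>x\<in>snd p. scomp (L X k (fst q)) x = snd q)"

definition is_lub :: "(real ^ ('n::finite)) set \<Rightarrow> nat \<Rightarrow> real \<times> (real ^ ('n::finite)) set \<Rightarrow> real \<times> (real ^ ('n::finite)) set
     \<Rightarrow> real \<times> (real ^ ('n::finite)) set \<Rightarrow> bool" where
  "is_lub X k a b c \<longleftrightarrow> gle X k a c \<and> gle X k b c \<and>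
     (\<forall>d. gle X k a d \<longrightarrow> gle X k b d \<longrightarrow> gle X k c d)"

definition join :: "(real ^ ('n::finite)) set \<Rightarrow> nat \<Rightarrow> real \<times> (real ^ ('n::finite)) set \<Rightarrow> real \<times> (real ^ ('n::finite)) set
     \<Rightarrow> real \<times> (real ^ ('n::finite)) set" where
  "join X k a b = (THE c. is_lub X k a b c)"

definition is_branch :: "(real ^ ('n::finite)) set \<Rightarrow> nat \<Rightarrow> real \<times> (real ^ ('n::finite)) set \<Rightarrow> bool" where
  "is_branch X k p \<longleftrightarrow> p \<in> Gamma X k \<and>
     ((\<exists>s0 < fst p. \<forall>s. s0 \<le> s \<and> s < fst p \<longrightarrow>
          (\<exists>C0 C1. C0 \<noteq> C1 \<and> gle X k (s, C0) p \<and> gle X k (s, C1) p))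
      \<or> \<not> (\<exists>q. fst q < fst p \<and> gle X k q p))"

definition Br :: "(real ^ ('n::finite)) set \<Rightarrow> nat \<Rightarrow> (real \<times> (real ^ ('n::finite)) set) set" where
  "Br X k = {p. is_branch X k p}"

definition maxbr :: "(real ^ ('n::finite)) set \<Rightarrow> nat \<Rightarrow> real \<times> (real ^ ('n::finite)) set \<Rightarrow> real \<times> (real ^ ('n::finite)) set" where
  "maxbr X k p = (THE b. is_branch X k b \<and> gle X k b p \<and>
      (\<forall>b'. is_branch X k b' \<and> gle X k b' p \<longrightarrow> gle X k b' b))"

text \<open>i_*: send (s,[x]) to the maximal branch point of Gamma_k(Y) below (s,[x]_Y).
The representative x of the class is chosen arbitrarily (the result does not
depend on the choice).\<close>
definition istar :: "(real ^ ('n::finite)) set \<Rightarrow> nat \<Rightarrow> real \<times> (real ^ ('n::finite)) set \<Rightarrow> real \<times> (real ^ ('n::finite)) set" where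
  "istar Y k p = maxbr Y k (fst p, scomp (L Y k (fst p)) (SOME x. x \<in> snd p))"

end

theory Submission
  imports Defs
begin

text \<open>
  Since \<open>L X k s \<subseteq> L Y k s\<close>, sending \<open>(s, [x]\<^sub>X)\<close> to \<open>(s, [x]\<^sub>Y)\<close> is monotone, and so is taking
  the maximal branch point below an element; hence \<open>istar\<close> preserves order, and the join
  inequality holds because the image of \<open>a \<union> b\<close> is an upper bound of the images of \<open>a\<close> and \<open>b\<close>.

  The work lies in showing that joins and maximal branch points exist. For finite \<open>Z\<close> the
  complex \<open>L Z k s\<close> is a right-continuous step function of \<open>s\<close> that changes only at pairwise
  distances, so the relevant infima are attained. The join of \<open>(s, [x])\<close> and \<open>(t, [y])\<close> sits at
  the least level \<open>\<ge> max s t\<close> at which \<open>x\<close> and \<open>y\<close> are connected; such a level exists because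
  at the diameter of \<open>Z\<close> any two of its at least \<open>k + 1\<close> points span an edge. Below \<open>p\<close>, let
  \<open>u\<close> be the least level from which on \<open>p\<close> has exactly one ancestor at every level. Just below
  \<open>u\<close> the number of ancestors is \<open>0\<close> or at least \<open>2\<close>, so the ancestor at \<open>u\<close> is a branch
  point, and a branch point below \<open>p\<close> at a level above \<open>u\<close> would contradict uniqueness.
\<close>

lemma equivp_edge_closure: "equivp (\<lambda>u v. {u, v} \<in> K)\<^sup>*\<^sup>*"
  by (rule equivp_rtranclp) (simp add: symp_def insert_commute)

lemma scomp_refl: "x \<in> scomp K x"
  by (simp add: scomp_def)

lemma scomp_eq: "y \<in> scomp K x \<Longrightarrow> scomp K y = scomp K x"
  using equivp_edge_closure[of K] unfolding scomp_def equivp_def by simp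

lemma scomp_mono: "K \<subseteq> K' \<Longrightarrow> y \<in> scomp K x \<Longrightarrow> y \<in> scomp K' x"
  unfolding scomp_def by (auto elim: rtranclp_mono[THEN predicate2D, rotated])

lemma scomp_subset_Union: "x \<in> \<Union>K \<Longrightarrow> scomp K x \<subseteq> \<Union>K"
proof
  fix y assume x: "x \<in> \<Union>K" and "y \<in> scomp K x"
  then have "(\<lambda>u v. {u, v} \<in> K)\<^sup>*\<^sup>* x y" by (simp add: scomp_def)
  then show "y \<in> \<Union>K"
    by induction (use x in auto)
qed

lemma pi0_scomp_eq: "C \<in> pi0 K \<Longrightarrow> x \<in> C \<Longrightarrow> scomp K x = C"
  unfolding pi0_def by (auto dest: scomp_eq)

lemma pi0_nonempty: "C \<in> pi0 K \<Longrightarrow> C \<noteq> {}"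
  unfolding pi0_def by (metis emptyE imageE scomp_refl)

lemma pi0_subset_Union: "C \<in> pi0 K \<Longrightarrow> C \<subseteq> \<Union>K"
  unfolding pi0_def by (auto intro: scomp_subset_Union[THEN subsetD])

lemma Lverts_mono:
  assumes "X \<subseteq> Y" "finite Y" "s \<le> t"
  shows "Lverts X k s \<subseteq> Lverts Y k t"
proof
  fix x assume "x \<in> Lverts X k s"
  moreover have "card {x'\<in>X. x' \<noteq> x \<and> dist x x' \<le> s} \<le> card {x'\<in>Y. x' \<noteq> x \<and> dist x x' \<le> t}"
    by (rule card_mono) (use assms in auto)
  ultimately show "x \<in> Lverts Y k t"
    using assms(1) unfolding Lverts_def by auto
qed

lemma L_mono: "X \<subseteq> Y \<Longrightarrow> finite Y \<Longrightarrow> s \<le> t \<Longrightarrow> L X k s \<subseteq> L Y k t"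
  using Lverts_mono[of X Y s t k] unfolding L_def VR_def by force

lemma Union_L_subset: "\<Union>(L Z k s) \<subseteq> Z"
  unfolding L_def VR_def by auto

lemma L_eq_if_no_dist_between:
  assumes "a \<le> b" and no_dist: "\<And>x y. x \<in> Z \<Longrightarrow> y \<in> Z \<Longrightarrow> dist x y \<le> a \<or> b < dist x y"
  shows "L Z k b = L Z k a"
proof -
  have dist_iff: "dist x y \<le> b \<longleftrightarrow> dist x y \<le> a" if "x \<in> Z" "y \<in> Z" for x y
    using no_dist[OF that] \<open>a \<le> b\<close> by linarith
  have neighbours: "{x'\<in>Z. x' \<noteq> x \<and> dist x x' \<le> b} = {x'\<in>Z. x' \<noteq> x \<and> dist x x' \<le> a}"
    if "x \<in> Z" for x
    using dist_iff that by auto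
  have "VR Z b = VR Z a"
    using dist_iff unfolding VR_def by (auto simp: subset_iff)
  moreover have "Lverts Z k b = Lverts Z k a"
    using neighbours unfolding Lverts_def by auto
  ultimately show ?thesis
    unfolding L_def by simp
qed

lemma L_const_right:
  assumes "finite Z"
  shows "\<exists>e>0. \<forall>v. s \<le> v \<and> v < s + e \<longrightarrow> L Z k v = L Z k s"
proof -
  define A where "A = {d \<in> (\<lambda>(x, y). dist x y) ` (Z \<times> Z). s < d}"
  have "finite A"
    using assms unfolding A_def by simp
  define e where "e = (if A = {} then 1 else Min A - s)"
  have "e > 0"
  proof (cases "A = {}")
    case False
    then have "Min A \<in> A"
      using \<open>finite A\<close> by simp
    then show ?thesis
      using False unfolding e_def A_def by simp
  qed (simp add: e_def)
  moreover have "L Z k v = L Z k s" if "s \<le> v" "v < s + e" for v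
  proof (rule L_eq_if_no_dist_between)
    fix x y assume "x \<in> Z" "y \<in> Z"
    show "dist x y \<le> s \<or> v < dist x y"
    proof (cases "dist x y \<le> s")
      case False
      then have "dist x y \<in> A"
        using \<open>x \<in> Z\<close> \<open>y \<in> Z\<close> unfolding A_def by force
      then have "A \<noteq> {}" and "Min A \<le> dist x y"
        using \<open>finite A\<close> by auto
      then show ?thesis
        using \<open>v < s + e\<close> unfolding e_def by simp
    qed simp
  qed (use that in simp)
  ultimately show ?thesis
    by blast
qed

lemma L_const_left:
  assumes "finite Z"
  shows "\<exists>w<u. \<forall>v. w \<le> v \<and> v < u \<longrightarrow> L Z k v = L Z k w"
proof -
  define B where "B = insert (u - 1) {d \<in> (\<lambda>(x, y). dist x y) ` (Z \<times> Z). d < u}"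
  have "finite B"
    using assms unfolding B_def by simp
  define w where "w = Max B"
  have "w \<in> B"
    using \<open>finite B\<close> unfolding w_def B_def by (intro Max_in) auto
  then have "w < u"
    unfolding B_def by auto
  moreover have "L Z k v = L Z k w" if "w \<le> v" "v < u" for v
  proof (rule L_eq_if_no_dist_between)
    fix x y assume "x \<in> Z" "y \<in> Z"
    then have "dist x y < u \<Longrightarrow> dist x y \<in> B"
      unfolding B_def by force
    then show "dist x y \<le> w \<or> v < dist x y"
      using that \<open>finite B\<close> unfolding w_def by force
  qed (use that in simp)
  ultimately show ?thesis
    by blast
qed

lemma L_eq_between:
  "finite Z \<Longrightarrow> u \<le> s \<Longrightarrow> s \<le> v \<Longrightarrow> L Z k u = L Z k v \<Longrightarrow> L Z k s = L Z k v"
  by (metis L_mono order_refl subset_antisym)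

lemma scomp_L_at_diameter:
  assumes "finite Z" "k + 1 \<le> card Z" and diam: "\<forall>x\<in>Z. \<forall>y\<in>Z. dist x y \<le> s"
    and "x \<in> Z" "y \<in> Z"
  shows "y \<in> scomp (L Z k s) x"
proof -
  have "z \<in> Lverts Z k s" if "z \<in> Z" for z
  proof -
    have "{x'\<in>Z. x' \<noteq> z \<and> dist z x' \<le> s} = Z - {z}"
      using diam that by auto
    then show ?thesis
      using that assms(1,2) unfolding Lverts_def by simp
  qed
  moreover have "0 \<le> s"
    using diam \<open>x \<in> Z\<close> by (metis dist_self)
  ultimately have "{x, y} \<in> L Z k s"
    using assms unfolding L_def VR_def by auto
  then show ?thesis
    unfolding scomp_def by auto
qed

lemma Gamma_iff: "(s, C) \<in> Gamma Z k \<longleftrightarrow> 0 \<le> s \<and> C \<in> pi0 (L Z k s)"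
  by (simp add: Gamma_def)

lemma scomp_in_Gamma: "0 \<le> s \<Longrightarrow> x \<in> \<Union>(L Z k s) \<Longrightarrow> (s, scomp (L Z k s) x) \<in> Gamma Z k"
  by (simp add: Gamma_def pi0_def)

lemma gle_Gamma:
  assumes "gle Z k p q"
  shows "p \<in> Gamma Z k" and "q \<in> Gamma Z k"
  using assms by (simp_all add: gle_def)

lemma gle_refl: "p \<in> Gamma Z k \<Longrightarrow> gle Z k p p"
  by (cases p) (simp add: gle_def Gamma_def pi0_scomp_eq)

lemma gle_trans: "gle Z k p q \<Longrightarrow> gle Z k q r \<Longrightarrow> gle Z k p r"
  unfolding gle_def by (metis order_trans scomp_refl)

lemma gle_antisym:
  assumes pq: "gle Z k p q" and qp: "gle Z k q p"
  shows "p = q"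
proof -
  have "snd p \<in> pi0 (L Z k (fst p))"
    using pq unfolding gle_def Gamma_def by auto
  moreover obtain x where x: "x \<in> snd p"
    using pi0_nonempty[OF calculation] by blast
  ultimately have "scomp (L Z k (fst p)) x = snd p"
    by (rule pi0_scomp_eq)
  moreover have "fst p = fst q"
    using pq qp unfolding gle_def by simp
  moreover have "scomp (L Z k (fst q)) x = snd q"
    using pq x unfolding gle_def by simp
  ultimately show ?thesis
    by (simp add: prod_eq_iff)
qed

lemma gle_scomp:
  assumes "finite Z" "0 \<le> s" "s \<le> t" "x \<in> \<Union>(L Z k s)"
  shows "gle Z k (s, scomp (L Z k s) x) (t, scomp (L Z k t) x)"
proof -
  have st: "L Z k s \<subseteq> L Z k t"
    using assms by (simp add: L_mono)
  then have "x \<in> \<Union>(L Z k t)"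
    using assms(4) by blast
  moreover have "scomp (L Z k t) y = scomp (L Z k t) x" if "y \<in> scomp (L Z k s) x" for y
    using scomp_mono[OF st that] by (rule scomp_eq)
  ultimately show ?thesis
    using assms scomp_in_Gamma[of s x Z k] scomp_in_Gamma[of t x Z k] unfolding gle_def by simp
qed

lemma gle_push:
  assumes "finite Z" "(s, C) \<in> Gamma Z k" "s \<le> t" "x \<in> C"
  shows "gle Z k (s, C) (t, scomp (L Z k t) x)"
proof -
  have "0 \<le> s" and C: "C \<in> pi0 (L Z k s)"
    using assms(2) by (simp_all add: Gamma_iff)
  moreover have "x \<in> \<Union>(L Z k s)"
    using pi0_subset_Union[OF C] assms(4) by blast
  ultimately show ?thesis
    using gle_scomp[of Z s t x k] pi0_scomp_eq[OF C assms(4)] assms(1,3) by simp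
qed

lemma gle_push_between:
  assumes "finite Z" "gle Z k (s, C) p" "s \<le> u" "u \<le> fst p" "x \<in> C"
  shows "gle Z k (u, scomp (L Z k u) x) p"
proof -
  have "(s, C) \<in> Gamma Z k"
    using assms(2) by (rule gle_Gamma)
  then have "x \<in> \<Union>(L Z k s)" "0 \<le> s"
    using assms(5) pi0_subset_Union[of C] by (auto simp: Gamma_iff)
  then have "x \<in> \<Union>(L Z k u)"
    using L_mono[of Z Z s u k] assms(1,3) by auto
  moreover have "p = (fst p, scomp (L Z k (fst p)) x)"
    using assms(2,5) unfolding gle_def by simp
  ultimately show ?thesis
    using gle_scomp[of Z u "fst p" x k] assms \<open>0 \<le> s\<close> by (metis order_trans)
qed

lemma Inf_mem_if_L_eq_closed:
  assumes "finite Z" "V \<noteq> {}" "bdd_below V"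
    and closed: "\<And>v. v \<in> V \<Longrightarrow> L Z k v = L Z k (Inf V) \<Longrightarrow> Inf V \<in> V"
  shows "Inf V \<in> V"
proof -
  obtain e where "e > 0" and e: "\<forall>v. Inf V \<le> v \<and> v < Inf V + e \<longrightarrow> L Z k v = L Z k (Inf V)"
    using L_const_right[OF assms(1)] by blast
  then obtain v where "v \<in> V" "v < Inf V + e"
    using cInf_lessD[OF assms(2), of "Inf V + e"] by auto
  moreover have "Inf V \<le> v"
    using \<open>v \<in> V\<close> assms(3) by (rule cInf_lower)
  ultimately show ?thesis
    using e closed by blast
qed

lemma least_connecting_level:
  assumes "finite Z" "k + 1 \<le> card Z" "x \<in> Z" "y \<in> Z"
  obtains v where "m \<le> v" "y \<in> scomp (L Z k v) x"
    and "\<And>w. m \<le> w \<Longrightarrow> y \<in> scomp (L Z k w) x \<Longrightarrow> v \<le> w"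
proof -
  define V where "V = {v. m \<le> v \<and> y \<in> scomp (L Z k v) x}"
  define M where "M = Max ((\<lambda>(x, y). dist x y) ` (Z \<times> Z))"
  have "\<forall>x'\<in>Z. \<forall>y'\<in>Z. dist x' y' \<le> max m M"
    using assms(1) unfolding M_def by (fastforce intro: Max_ge le_max_iff_disj[THEN iffD2])
  then have "max m M \<in> V"
    unfolding V_def using scomp_L_at_diameter assms by simp
  then have "V \<noteq> {}" and "bdd_below V"
    unfolding V_def bdd_below_def by blast+
  then have "Inf V \<in> V"
  proof (rule Inf_mem_if_L_eq_closed[OF assms(1)])
    fix v assume "v \<in> V" "L Z k v = L Z k (Inf V)"
    moreover have "m \<le> Inf V"
      using \<open>V \<noteq> {}\<close> unfolding V_def by (auto intro: cInf_greatest)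
    ultimately show "Inf V \<in> V"
      unfolding V_def by simp
  qed
  then show ?thesis
    using that cInf_lower[OF _ \<open>bdd_below V\<close>] unfolding V_def by blast
qed

lemma is_lub_exists:
  assumes Z: "finite Z" "k + 1 \<le> card Z" and "a \<in> Gamma Z k" "b \<in> Gamma Z k"
  shows "\<exists>c. is_lub Z k a b c"
proof -
  obtain s C t D where a: "a = (s, C)" and b: "b = (t, D)"
    by (cases a, cases b)
  have C: "C \<in> pi0 (L Z k s)" and D: "D \<in> pi0 (L Z k t)"
    using assms a b by (simp_all add: Gamma_iff)
  obtain x y where "x \<in> C" "y \<in> D"
    using pi0_nonempty[OF C] pi0_nonempty[OF D] by blast
  then have "x \<in> Z" "y \<in> Z"
    using pi0_subset_Union[OF C] pi0_subset_Union[OF D] Union_L_subset by blast+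
  then obtain v where v: "max s t \<le> v" "y \<in> scomp (L Z k v) x"
    and least: "\<And>w. max s t \<le> w \<Longrightarrow> y \<in> scomp (L Z k w) x \<Longrightarrow> v \<le> w"
    using least_connecting_level[OF Z] by metis
  define c where "c = (v, scomp (L Z k v) x)"
  have ac: "gle Z k a c"
    unfolding a c_def using gle_push[OF Z(1) assms(3)[unfolded a] _ \<open>x \<in> C\<close>] v(1) by simp
  have "gle Z k b (v, scomp (L Z k v) y)"
    unfolding b using gle_push[OF Z(1) assms(4)[unfolded b] _ \<open>y \<in> D\<close>] v(1) by simp
  then have bc: "gle Z k b c"
    unfolding c_def using scomp_eq[OF v(2)] by simp
  have "gle Z k c d" if ad: "gle Z k a d" and bd: "gle Z k b d" for d
  proof -
    obtain w E where d: "d = (w, E)"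
      by (cases d)
    have "s \<le> w" "t \<le> w" "scomp (L Z k w) x = E" "scomp (L Z k w) y = E"
      using ad bd \<open>x \<in> C\<close> \<open>y \<in> D\<close> unfolding a b d gle_def by auto
    then have "v \<le> w"
      using least scomp_refl[of y "L Z k w"] by simp
    moreover have "c \<in> Gamma Z k"
      using ac by (rule gle_Gamma)
    ultimately show ?thesis
      using gle_push[OF Z(1), of v _ k w x] scomp_refl[of x] \<open>scomp (L Z k w) x = E\<close>
      unfolding c_def d by simp
  qed
  then show ?thesis
    unfolding is_lub_def using ac bc by blast
qed

lemma is_lub_unique: "is_lub Z k a b c \<Longrightarrow> is_lub Z k a b c' \<Longrightarrow> c' = c"
  unfolding is_lub_def by (blast intro: gle_antisym)

lemma join_is_lub:
  assumes "finite Z" "k + 1 \<le> card Z" "a \<in> Gamma Z k" "b \<in> Gamma Z k"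
  shows "is_lub Z k a b (join Z k a b)"
proof -
  obtain c where c: "is_lub Z k a b c"
    using is_lub_exists[OF assms] by blast
  then show ?thesis
    unfolding join_def by (rule theI) (rule is_lub_unique[OF c])
qed

definition unique_below_at :: "(real ^ ('n::finite)) set \<Rightarrow> nat \<Rightarrow> real \<times> (real ^ 'n) set \<Rightarrow> real \<Rightarrow> bool"
  where "unique_below_at Z k p s \<longleftrightarrow> (\<exists>!C. gle Z k (s, C) p)"

definition stable_from :: "(real ^ ('n::finite)) set \<Rightarrow> nat \<Rightarrow> real \<times> (real ^ 'n) set \<Rightarrow> real \<Rightarrow> bool"
  where "stable_from Z k p s \<longleftrightarrow>
    0 \<le> s \<and> s \<le> fst p \<and> (\<forall>s'. s \<le> s' \<and> s' \<le> fst p \<longrightarrow> unique_below_at Z k p s')"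

definition birth_level :: "(real ^ ('n::finite)) set \<Rightarrow> nat \<Rightarrow> real \<times> (real ^ 'n) set \<Rightarrow> real"
  where "birth_level Z k p = Inf {s. stable_from Z k p s}"

definition birth_point :: "(real ^ ('n::finite)) set \<Rightarrow> nat \<Rightarrow> real \<times> (real ^ 'n) set \<Rightarrow> real \<times> (real ^ 'n) set"
  where "birth_point Z k p = (birth_level Z k p, THE C. gle Z k (birth_level Z k p, C) p)"

lemma unique_below_atD:
  "unique_below_at Z k p s \<Longrightarrow> gle Z k (s, C) p \<Longrightarrow> gle Z k (s, C') p \<Longrightarrow> C = C'"
  unfolding unique_below_at_def by blast

lemma unique_below_at_top:
  assumes "p \<in> Gamma Z k"
  shows "unique_below_at Z k p (fst p)"
proof -
  have "C = snd p" if "gle Z k (fst p, C) p" for C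
  proof -
    have C: "C \<in> pi0 (L Z k (fst p))"
      using gle_Gamma(1)[OF that] by (simp add: Gamma_iff)
    then obtain x where "x \<in> C"
      using pi0_nonempty by blast
    then show ?thesis
      using that pi0_scomp_eq[OF C] unfolding gle_def by auto
  qed
  moreover have "gle Z k (fst p, snd p) p"
    using gle_refl[OF assms] by simp
  ultimately show ?thesis
    unfolding unique_below_at_def by blast
qed

lemma unique_below_at_level_cong:
  assumes "L Z k u = L Z k v" "0 \<le> u" "0 \<le> v" "u \<le> fst p" "v \<le> fst p"
  shows "unique_below_at Z k p u \<longleftrightarrow> unique_below_at Z k p v"
  using assms unfolding unique_below_at_def gle_def Gamma_def by simp

lemma stable_from_birth_level:
  assumes Z: "finite Z" and p: "p \<in> Gamma Z k"
  shows "stable_from Z k p (birth_level Z k p)"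
proof -
  define U where "U = {s. stable_from Z k p s}"
  have "fst p \<in> U"
    using p unique_below_at_top[OF p] unfolding U_def stable_from_def Gamma_def by auto
  then have "U \<noteq> {}" and "bdd_below U"
    unfolding U_def stable_from_def bdd_below_def by blast+
  then have "Inf U \<in> U"
  proof (rule Inf_mem_if_L_eq_closed[OF Z])
    fix v assume "v \<in> U" and Lv: "L Z k v = L Z k (Inf U)"
    have "0 \<le> Inf U"
      using \<open>U \<noteq> {}\<close> unfolding U_def stable_from_def by (auto intro: cInf_greatest)
    have "Inf U \<le> v"
      using \<open>v \<in> U\<close> \<open>bdd_below U\<close> by (rule cInf_lower)
    have "unique_below_at Z k p s" if "Inf U \<le> s" "s \<le> fst p" for s
    proof (cases "v \<le> s")
      case True
      then show ?thesis
        using \<open>v \<in> U\<close> that unfolding U_def stable_from_def by blast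
    next
      case False
      then have "L Z k s = L Z k v"
        using L_eq_between[OF Z \<open>Inf U \<le> s\<close>, of v] Lv by simp
      then show ?thesis
        using unique_below_at_level_cong[of Z k s v p] \<open>v \<in> U\<close> that \<open>0 \<le> Inf U\<close>
        unfolding U_def stable_from_def by auto
    qed
    then show "Inf U \<in> U"
      using \<open>0 \<le> Inf U\<close> \<open>Inf U \<le> v\<close> \<open>v \<in> U\<close> unfolding U_def stable_from_def by auto
  qed
  then show ?thesis
    unfolding U_def birth_level_def by simp
qed

lemma birth_level_bounds:
  assumes "finite Z" "p \<in> Gamma Z k"
  shows "0 \<le> birth_level Z k p" "birth_level Z k p \<le> fst p"
  using stable_from_birth_level[OF assms] unfolding stable_from_def by auto

lemma unique_below_at_above_birth_level:
  assumes "finite Z" "p \<in> Gamma Z k" "birth_level Z k p \<le> s" "s \<le> fst p"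
  shows "unique_below_at Z k p s"
  using stable_from_birth_level[OF assms(1,2)] assms(3,4) unfolding stable_from_def by auto

lemma not_unique_below_birth_level:
  assumes Z: "finite Z" and p: "p \<in> Gamma Z k"
  obtains w where "w < birth_level Z k p"
    and "\<And>s. w \<le> s \<Longrightarrow> s < birth_level Z k p \<Longrightarrow> \<not> unique_below_at Z k p s"
proof -
  let ?u = "birth_level Z k p"
  obtain w where "w < ?u" and w: "\<And>v. w \<le> v \<Longrightarrow> v < ?u \<Longrightarrow> L Z k v = L Z k w"
    using L_const_left[OF Z] by blast
  moreover have "\<not> unique_below_at Z k p s" if "w \<le> s" "s < ?u" for s
  proof (cases "0 \<le> s")
    case False
    then have "\<not> gle Z k (s, C) p" for C
      unfolding gle_def Gamma_def by simp
    then show ?thesis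
      unfolding unique_below_at_def by blast
  next
    case True
    have "bdd_below {s. stable_from Z k p s}"
      unfolding bdd_below_def stable_from_def by auto
    then have "\<not> stable_from Z k p s"
      using cInf_lower[of s "{s. stable_from Z k p s}"] \<open>s < ?u\<close>
      unfolding birth_level_def by auto
    moreover have "s \<le> fst p"
      using birth_level_bounds[OF Z p] \<open>s < ?u\<close> by simp
    ultimately obtain s' where s': "s \<le> s'" "s' \<le> fst p" "\<not> unique_below_at Z k p s'"
      using True unfolding stable_from_def by blast
    then have "s' < ?u"
      using unique_below_at_above_birth_level[OF Z p, of s'] by (meson not_le)
    then have "L Z k s = L Z k s'"
      using w[of s] w[of s'] that s' by simp
    then show ?thesis
      using unique_below_at_level_cong[of Z k s s' p] True s' by simp
  qed
  ultimately show ?thesis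
    using that by blast
qed

lemma birth_point_eq:
  assumes "finite Z" "p \<in> Gamma Z k" "gle Z k (birth_level Z k p, C) p"
  shows "birth_point Z k p = (birth_level Z k p, C)"
proof -
  have "unique_below_at Z k p (birth_level Z k p)"
    using unique_below_at_above_birth_level[OF assms(1,2) order_refl birth_level_bounds(2)[OF assms(1,2)]] .
  then have "(THE C. gle Z k (birth_level Z k p, C) p) = C"
    using assms(3) unfolding unique_below_at_def by (rule the1_equality)
  then show ?thesis
    unfolding birth_point_def by simp
qed

lemma gle_birth_point_if_below:
  assumes Z: "finite Z" and p: "p \<in> Gamma Z k"
    and sC: "gle Z k (s, C) p" and "s \<le> birth_level Z k p"
  shows "gle Z k (s, C) (birth_point Z k p)"
proof -
  let ?u = "birth_level Z k p"
  have "(s, C) \<in> Gamma Z k"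
    using sC by (rule gle_Gamma)
  then obtain x where "x \<in> C"
    using pi0_nonempty unfolding Gamma_iff by blast
  then have "gle Z k (s, C) (?u, scomp (L Z k ?u) x)"
    using gle_push[OF Z \<open>(s, C) \<in> Gamma Z k\<close> \<open>s \<le> ?u\<close>] by simp
  moreover have "gle Z k (?u, scomp (L Z k ?u) x) p"
    using gle_push_between[OF Z sC \<open>s \<le> ?u\<close> _ \<open>x \<in> C\<close>] birth_level_bounds[OF Z p] by simp
  ultimately show ?thesis
    using birth_point_eq[OF Z p, of "scomp (L Z k ?u) x"] by simp
qed

lemma birth_point_le:
  assumes Z: "finite Z" and p: "p \<in> Gamma Z k"
  shows "gle Z k (birth_point Z k p) p"
proof -
  have "unique_below_at Z k p (birth_level Z k p)"
    using unique_below_at_above_birth_level[OF Z p order_refl birth_level_bounds(2)[OF Z p]] .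
  then obtain C where "gle Z k (birth_level Z k p, C) p"
    unfolding unique_below_at_def by blast
  with birth_point_eq[OF Z p this] show ?thesis
    by simp
qed

lemma birth_point_merges:
  assumes Z: "finite Z" and p: "p \<in> Gamma Z k"
    and sC: "gle Z k (s, C) (birth_point Z k p)" and "s < birth_level Z k p"
  shows "\<exists>s0 < birth_level Z k p. \<forall>s'. s0 \<le> s' \<and> s' < birth_level Z k p \<longrightarrow>
          (\<exists>C0 C1. C0 \<noteq> C1 \<and> gle Z k (s', C0) (birth_point Z k p) \<and> gle Z k (s', C1) (birth_point Z k p))"
proof -
  let ?u = "birth_level Z k p"
  obtain w where "w < ?u" and not_unique: "\<And>s'. w \<le> s' \<Longrightarrow> s' < ?u \<Longrightarrow> \<not> unique_below_at Z k p s'"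
    using not_unique_below_birth_level[OF Z p] by blast
  have sCp: "gle Z k (s, C) p"
    using gle_trans[OF sC birth_point_le[OF Z p]] .
  then have "C \<in> pi0 (L Z k s)"
    using gle_Gamma(1) Gamma_iff by blast
  then obtain x where "x \<in> C"
    using pi0_nonempty by blast
  have "\<exists>C0 C1. C0 \<noteq> C1 \<and> gle Z k (s', C0) (birth_point Z k p) \<and> gle Z k (s', C1) (birth_point Z k p)"
    if s': "max w s \<le> s'" "s' < ?u" for s'
  proof -
    have C0: "gle Z k (s', scomp (L Z k s') x) p"
      using gle_push_between[OF Z sCp _ _ \<open>x \<in> C\<close>, of s'] s' birth_level_bounds[OF Z p] by simp
    moreover obtain C1 where C1: "gle Z k (s', C1) p" "C1 \<noteq> scomp (L Z k s') x"
      using not_unique[of s'] s' C0 unfolding unique_below_at_def by auto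
    ultimately show ?thesis
      using gle_birth_point_if_below[OF Z p C0] gle_birth_point_if_below[OF Z p C1(1)] s' by auto
  qed
  moreover have "max w s < ?u"
    using \<open>w < ?u\<close> \<open>s < ?u\<close> by simp
  ultimately show ?thesis
    by blast
qed

lemma birth_point_is_branch:
  assumes Z: "finite Z" and p: "p \<in> Gamma Z k"
  shows "is_branch Z k (birth_point Z k p)"
proof -
  let ?u = "birth_level Z k p" and ?b = "birth_point Z k p"
  have fst_b: "fst ?b = ?u"
    by (simp add: birth_point_def)
  have "?b \<in> Gamma Z k"
    using birth_point_le[OF Z p] by (rule gle_Gamma)
  show ?thesis
  proof (cases "\<exists>q. fst q < ?u \<and> gle Z k q ?b")
    case True
    then obtain s C where "gle Z k (s, C) ?b" "s < ?u"
      by (metis prod.collapse)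
    then show ?thesis
      using birth_point_merges[OF Z p] \<open>?b \<in> Gamma Z k\<close> unfolding is_branch_def fst_b by blast
  next
    case False
    then show ?thesis
      using \<open>?b \<in> Gamma Z k\<close> unfolding is_branch_def fst_b by blast
  qed
qed

lemma birth_point_le_if_above:
  assumes Z: "finite Z" and p: "p \<in> Gamma Z k"
    and sC: "gle Z k (s, C) p" and "birth_level Z k p \<le> s"
  shows "gle Z k (birth_point Z k p) (s, C)"
proof -
  let ?u = "birth_level Z k p"
  obtain Cb where Cb: "birth_point Z k p = (?u, Cb)"
    by (simp add: birth_point_def)
  have bp: "gle Z k (?u, Cb) p"
    using birth_point_le[OF Z p] Cb by simp
  then have "(?u, Cb) \<in> Gamma Z k"
    by (rule gle_Gamma)
  then obtain x where x: "x \<in> Cb"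
    using pi0_nonempty unfolding Gamma_iff by blast
  have "s \<le> fst p"
    using sC unfolding gle_def by simp
  have "gle Z k (s, scomp (L Z k s) x) p"
    using gle_push_between[OF Z bp _ \<open>s \<le> fst p\<close> x] \<open>?u \<le> s\<close> by simp
  moreover have "unique_below_at Z k p s"
    using unique_below_at_above_birth_level[OF Z p \<open>?u \<le> s\<close> \<open>s \<le> fst p\<close>] .
  ultimately have "scomp (L Z k s) x = C"
    using unique_below_atD sC by blast
  then show ?thesis
    using gle_push[OF Z \<open>(?u, Cb) \<in> Gamma Z k\<close> \<open>?u \<le> s\<close> x] Cb by simp
qed

lemma branch_below_le_birth_point:
  assumes Z: "finite Z" and p: "p \<in> Gamma Z k"
    and br: "is_branch Z k b" and bp: "gle Z k b p"
  shows "gle Z k b (birth_point Z k p)"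
proof -
  let ?u = "birth_level Z k p" and ?b = "birth_point Z k p"
  obtain s C where b: "b = (s, C)"
    by (cases b)
  have "s \<le> ?u"
  proof (rule ccontr)
    assume "\<not> s \<le> ?u"
    then have "?u < s" and "s \<le> fst p"
      using bp unfolding b gle_def by auto
    have below_b: "gle Z k ?b b"
      using birth_point_le_if_above[OF Z p bp[unfolded b]] \<open>?u < s\<close> b by simp
    show False
      using br[unfolded is_branch_def]
    proof (elim conjE disjE exE)
      fix s0 assume "s0 < fst b" and split: "\<forall>s'. s0 \<le> s' \<and> s' < fst b \<longrightarrow>
          (\<exists>C0 C1. C0 \<noteq> C1 \<and> gle Z k (s', C0) b \<and> gle Z k (s', C1) b)"
      define s' where "s' = max s0 ?u"
      have "s0 \<le> s'" "s' < s" "?u \<le> s'"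
        using \<open>s0 < fst b\<close> \<open>?u < s\<close> b unfolding s'_def by auto
      then obtain C0 C1 where "C0 \<noteq> C1" "gle Z k (s', C0) b" "gle Z k (s', C1) b"
        using split[rule_format, of s'] b by auto
      moreover have "unique_below_at Z k p s'"
        using unique_below_at_above_birth_level[OF Z p \<open>?u \<le> s'\<close>] \<open>s' < s\<close> \<open>s \<le> fst p\<close> by simp
      ultimately show False
        using unique_below_atD gle_trans[OF _ bp] by blast
    next
      assume "\<nexists>q. fst q < fst b \<and> gle Z k q b"
      moreover have "fst ?b < fst b"
        using b \<open>?u < s\<close> by (simp add: birth_point_def)
      ultimately show False
        using below_b by blast
    qed
  qed
  then show ?thesis
    using gle_birth_point_if_below[OF Z p] bp b by simp
qed

lemma maxbr_eq_birth_point: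
  assumes Z: "finite Z" and p: "p \<in> Gamma Z k"
  shows "maxbr Z k p = birth_point Z k p"
  unfolding maxbr_def
proof (rule the_equality)
  show "is_branch Z k (birth_point Z k p) \<and> gle Z k (birth_point Z k p) p \<and>
      (\<forall>b'. is_branch Z k b' \<and> gle Z k b' p \<longrightarrow> gle Z k b' (birth_point Z k p))"
    using birth_point_is_branch[OF Z p] birth_point_le[OF Z p] branch_below_le_birth_point[OF Z p]
    by blast
next
  fix b assume "is_branch Z k b \<and> gle Z k b p \<and> (\<forall>b'. is_branch Z k b' \<and> gle Z k b' p \<longrightarrow> gle Z k b' b)"
  then show "b = birth_point Z k p"
    using birth_point_is_branch[OF Z p] birth_point_le[OF Z p] branch_below_le_birth_point[OF Z p]
    by (blast intro: gle_antisym)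
qed

lemma maxbr_mono:
  assumes Z: "finite Z" and pq: "gle Z k p q"
  shows "gle Z k (maxbr Z k p) (maxbr Z k q)"
proof -
  have p: "p \<in> Gamma Z k" and q: "q \<in> Gamma Z k"
    using pq by (rule gle_Gamma)+
  have "gle Z k (birth_point Z k p) q"
    using gle_trans[OF birth_point_le[OF Z p] pq] .
  then show ?thesis
    using branch_below_le_birth_point[OF Z q birth_point_is_branch[OF Z p]]
    by (simp add: maxbr_eq_birth_point[OF Z p] maxbr_eq_birth_point[OF Z q])
qed

lemma gle_scomp_superset:
  assumes XY: "X \<subseteq> Y" and Y: "finite Y"
    and le: "gle X k (s, C) (t, D)" and "x \<in> C" "y \<in> D"
  shows "gle Y k (s, scomp (L Y k s) x) (t, scomp (L Y k t) y)"
proof -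
  have C: "C \<in> pi0 (L X k s)" and "0 \<le> s" "s \<le> t"
    using le unfolding gle_def Gamma_iff by auto
  then have "x \<in> \<Union>(L Y k s)"
    using pi0_subset_Union[OF C] L_mono[OF XY Y order_refl, of k s] \<open>x \<in> C\<close> by blast
  moreover have "y \<in> scomp (L Y k t) x"
    using le \<open>x \<in> C\<close> \<open>y \<in> D\<close> scomp_mono[OF L_mono[OF XY Y order_refl]] unfolding gle_def by auto
  ultimately show ?thesis
    using gle_scomp[OF Y \<open>0 \<le> s\<close> \<open>s \<le> t\<close>] scomp_eq by metis
qed

lemma istar_mono:
  assumes XY: "X \<subseteq> Y" and Y: "finite Y" and ab: "gle X k a b"
  shows "gle Y k (istar Y k a) (istar Y k b)"
proof -
  obtain s C t D where a: "a = (s, C)" and b: "b = (t, D)"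
    by (cases a, cases b)
  have "C \<in> pi0 (L X k s)" "D \<in> pi0 (L X k t)"
    using gle_Gamma[OF ab] unfolding a b Gamma_iff by auto
  then have "(SOME x. x \<in> C) \<in> C" "(SOME y. y \<in> D) \<in> D"
    using pi0_nonempty some_in_eq by blast+
  then show ?thesis
    using maxbr_mono[OF Y gle_scomp_superset[OF XY Y ab[unfolded a b]]]
    unfolding istar_def a b by simp
qed

theorem mainTheorem15:
  fixes X Y :: "(real ^ ('n::finite)) set" and k :: nat
  assumes "X \<subseteq> Y" and "finite Y" and "k + 1 \<le> card X"
  shows "(\<forall>a\<in>Br X k. \<forall>b\<in>Br X k. gle X k a b \<longrightarrow> gle Y k (istar Y k a) (istar Y k b))
       \<and> (\<forall>a\<in>Br X k. \<forall>b\<in>Br X k.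
            gle Y k (join Y k (istar Y k a) (istar Y k b)) (istar Y k (join X k a b)))"
proof (intro conjI ballI impI)
  fix a b assume "gle X k a b"
  then show "gle Y k (istar Y k a) (istar Y k b)"
    using istar_mono[OF assms(1,2)] by blast
next
  fix a b assume "a \<in> Br X k" "b \<in> Br X k"
  then have "a \<in> Gamma X k" "b \<in> Gamma X k"
    unfolding Br_def is_branch_def by auto
  moreover have "finite X"
    using assms(1,2) by (rule finite_subset)
  ultimately have "is_lub X k a b (join X k a b)"
    using join_is_lub assms(3) by blast
  then have ia: "gle Y k (istar Y k a) (istar Y k (join X k a b))"
    and ib: "gle Y k (istar Y k b) (istar Y k (join X k a b))"
    using istar_mono[OF assms(1,2)] unfolding is_lub_def by blast+
  have "k + 1 \<le> card Y"
    using card_mono[OF assms(2,1)] assms(3) by simp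
  then have "is_lub Y k (istar Y k a) (istar Y k b) (join Y k (istar Y k a) (istar Y k b))"
    using join_is_lub[OF assms(2)] gle_Gamma(1)[OF ia] gle_Gamma(1)[OF ib] by blast
  then show "gle Y k (join Y k (istar Y k a) (istar Y k b)) (istar Y k (join X k a b))"
    using ia ib unfolding is_lub_def by blast
qed

end
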